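(* Let $a,\delta,\beta,h_1,h_2$ be positive real parameters and consider the planar system of ordinary differential equations, defined for $x>0$, $$\frac{dx}{dt} = x(1-x) - \frac{x}{a+x^2}\,y - h_1 x,\qquad \frac{dy}{dt} = \delta y\left(1-\beta\frac{y}{x}\right) - h_2 y.$$ If $h_1\in\,]0,1[$ and $\delta\in\,]0,h_2[$, then the point $(1-h_1,0)$ is an equilibrium of this system and it is a sink.
   Context: This system is a rescaled prey-predator model with Leslie--Gower and simplified Holling IV functional response and constant-effort harvesting; $x$ denotes the prey and $y$ the predator population. An equilibrium point is called a sink if all eigenvalues of the Jacobian matrix of the vector field evaluated at that point have strictly negative real parts. *)

theory Defs
  imports "HOL-Analysis.Analysis"
begin

definition vf :: "real \<Rightarrow> real \<Rightarrow> real \<Rightarrow> real \<Rightarrow> real \<Rightarrow> real \<times> real \<Rightarrow> real \<times> real" where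
  "vf a \<delta> \<beta> h1 h2 = (\<lambda>(x, y).
     (x * (1 - x) - x / (a + x^2) * y - h1 * x,
      \<delta> * y * (1 - \<beta> * y / x) - h2 * y))"

definition equilibrium :: "(real \<times> real \<Rightarrow> real \<times> real) \<Rightarrow> real \<times> real \<Rightarrow> bool" where
  "equilibrium F p \<longleftrightarrow> F p = (0, 0)"

definition lin_eigenvalue :: "(real \<times> real \<Rightarrow> real \<times> real) \<Rightarrow> complex \<Rightarrow> bool" where
  "lin_eigenvalue J \<mu> \<longleftrightarrow> (\<exists>v1 v2 :: complex. (v1, v2) \<noteq> (0, 0) \<and>
     of_real (fst (J (1, 0))) * v1 + of_real (fst (J (0, 1))) * v2 = \<mu> * v1 \<and>
     of_real (snd (J (1, 0))) * v1 + of_real (snd (J (0, 1))) * v2 = \<mu> * v2)"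

definition sink :: "(real \<times> real \<Rightarrow> real \<times> real) \<Rightarrow> real \<times> real \<Rightarrow> bool" where
  "sink F p \<longleftrightarrow> (\<exists>J. (F has_derivative J) (at p) \<and>
     (\<forall>\<mu>. lin_eigenvalue J \<mu> \<longrightarrow> Re \<mu> < 0))"

end

theory Submission
  imports Defs
begin

text \<open>On the prey axis the Jacobian of the vector field is upper triangular, because the
predator equation has the factor y. Its eigenvalues at the prey-only equilibrium are
therefore its diagonal entries h1 - 1 and \<delta> - h2, both negative under the hypotheses.\<close>

lemma lin_eigenvalue_upper_triangular:
  assumes "snd (J (1, 0)) = 0" and "lin_eigenvalue J \<mu>"
  shows "\<mu> = of_real (fst (J (1, 0))) \<or> \<mu> = of_real (snd (J (0, 1)))"
proof -
  obtain v1 v2 :: complex where nz: "(v1, v2) \<noteq> (0, 0)"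
    and row1: "of_real (fst (J (1, 0))) * v1 + of_real (fst (J (0, 1))) * v2 = \<mu> * v1"
    and row2: "of_real (snd (J (1, 0))) * v1 + of_real (snd (J (0, 1))) * v2 = \<mu> * v2"
    using assms(2) unfolding lin_eigenvalue_def by blast
  show ?thesis
  proof (cases "v2 = 0")
    case True
    with nz have "v1 \<noteq> 0" by simp
    with row1 True show ?thesis by simp
  next
    case False
    with row2 assms(1) show ?thesis by simp
  qed
qed

lemma sink_if_upper_triangular_derivative:
  assumes "(F has_derivative J) (at p)" and "snd (J (1, 0)) = 0"
    and "fst (J (1, 0)) < 0" and "snd (J (0, 1)) < 0"
  shows "sink F p"
  unfolding sink_def
  using assms lin_eigenvalue_upper_triangular by fastforce

lemma vf_has_derivative_on_prey_axis:
  fixes x :: real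
  assumes "x \<noteq> 0" and "a + x^2 \<noteq> 0"
  shows "(vf a \<delta> \<beta> h1 h2 has_derivative
           (\<lambda>(u, v). ((1 - 2 * x - h1) * u - x / (a + x^2) * v, (\<delta> - h2) * v))) (at (x, 0))"
proof -
  \<comment> \<open>In the form in which the quotient rules of \<open>derivative_eq_intros\<close> ask for them.\<close>
  have nonzero: "fst (x, 0::real) \<noteq> 0" "a + (fst (x, 0::real))^2 \<noteq> 0"
    using assms by simp_all
  show ?thesis
    unfolding vf_def case_prod_beta
    by (rule has_derivative_eq_rhs, (rule derivative_eq_intros refl nonzero)+)
       (use assms in \<open>simp add: fun_eq_iff field_simps power2_eq_square\<close>)
qed

theorem theorem1:
  fixes a \<delta> \<beta> h1 h2 :: real
  assumes "a > 0" "\<delta> > 0" "\<beta> > 0" "h1 > 0" "h2 > 0"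
    and "h1 < 1" and "\<delta> < h2"
  shows "equilibrium (vf a \<delta> \<beta> h1 h2) (1 - h1, 0) \<and> sink (vf a \<delta> \<beta> h1 h2) (1 - h1, 0)"
proof
  show "equilibrium (vf a \<delta> \<beta> h1 h2) (1 - h1, 0)"
    unfolding equilibrium_def vf_def by (simp add: algebra_simps)
  have "a + (1 - h1)^2 > 0"
    using \<open>a > 0\<close> by (simp add: add_pos_nonneg)
  then have "1 - h1 \<noteq> 0" and "a + (1 - h1)^2 \<noteq> 0"
    using \<open>h1 < 1\<close> by simp_all
  from vf_has_derivative_on_prey_axis[OF this]
  show "sink (vf a \<delta> \<beta> h1 h2) (1 - h1, 0)"
    by (rule sink_if_upper_triangular_derivative) (use \<open>h1 < 1\<close> \<open>\<delta> < h2\<close> in auto)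
qed

end
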